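(* Let $\sigma$ be a closed convex curve in $\mathbb R^2$ and suppose that, near $q=(0,0)\in\sigma$, $\sigma$ is the graph of a convex function $f$ with $f(0)=0$, such that $f'(0)=0$ and the one-sided derivatives $f'_\pm$ are differentiable at $0$ with derivative $A\ge0$ (so $f'_\pm(t)=At+o(t)$ as $t\to0$). Then the osculating curvature of $\sigma$ at $q$ exists and equals $A$.
   Context: For three points $p_1,p_2,p_3\in\mathbb R^2$ forming a triangle of area $\mathcal A$, $\chi_0(p_1,p_2,p_3)=\frac{4\mathcal A}{|p_1p_2||p_2p_3||p_3p_1|}$ (the curvature of the circle through them). The osculating curvature of $\sigma$ at $q$ is $\lim\chi_0(p,q,m)$ as $p,m\to q$ along $\sigma$ from opposite sides of $q$. *)

theory Defs
  imports "HOL-Analysis.Analysis"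
begin

definition tri_area :: "real \<times> real \<Rightarrow> real \<times> real \<Rightarrow> real \<times> real \<Rightarrow> real" where
  "tri_area p1 p2 p3 =
     \<bar>(fst p2 - fst p1) * (snd p3 - snd p1) - (fst p3 - fst p1) * (snd p2 - snd p1)\<bar> / 2"

text \<open>Curvature of the circle through three points.\<close>
definition chi0 :: "real \<times> real \<Rightarrow> real \<times> real \<Rightarrow> real \<times> real \<Rightarrow> real" where
  "chi0 p1 p2 p3 = 4 * tri_area p1 p2 p3 / (dist p1 p2 * dist p2 p3 * dist p3 p1)"

definition closed_convex_curve :: "(real \<times> real) set \<Rightarrow> bool" where
  "closed_convex_curve \<sigma> \<longleftrightarrow>
     (\<exists>K. compact K \<and> convex K \<and> interior K \<noteq> {} \<and> \<sigma> = frontier K)"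

definition rderiv :: "(real \<Rightarrow> real) \<Rightarrow> real \<Rightarrow> real" where
  "rderiv f t = Lim (at_right 0) (\<lambda>h. (f (t + h) - f t) / h)"

definition lderiv :: "(real \<Rightarrow> real) \<Rightarrow> real \<Rightarrow> real" where
  "lderiv f t = Lim (at_left 0) (\<lambda>h. (f (t + h) - f t) / h)"

text \<open>Osculating curvature of \<sigma> at q equals k: limit of chi0(p,q,m) as p, m \<rightarrow> q
  along \<sigma>, p and m on opposite sides of q (here: given by the sign of the
  x-coordinate, since near q the curve is a graph over the x-axis).\<close>
definition osc_curvature_graph :: "(real \<times> real) set \<Rightarrow> real \<times> real \<Rightarrow> real \<Rightarrow> bool" where
  "osc_curvature_graph \<sigma> q k \<longleftrightarrow>
     ((\<lambda>(p, m). chi0 p q m) \<longlongrightarrow> k)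
       (at (q, q) within {(p, m). p \<in> \<sigma> \<and> m \<in> \<sigma> \<and> fst p < fst q \<and> fst q < fst m})"

end

theory Submission
  imports Defs
begin

text \<open>Convexity squeezes every chord slope of \<open>f\<close> between the right derivative at its left
  end and the left derivative at its right end. Both one-sided derivatives are \<open>A t + o(t)\<close>,
  so summing chord slopes over finer and finer partitions of \<open>[0, x]\<close> gives
  \<open>f x = A x\<^sup>2 / 2 + o(x\<^sup>2)\<close>. For \<open>a < 0 < b\<close> the circle through \<open>(a, f a)\<close>,
  \<open>(0, 0)\<close>, \<open>(b, f b)\<close> has curvature \<open>|2 (f b / b - f a / a) / (b - a)|\<close> divided by three
  factors \<open>sqrt (1 + s\<^sup>2)\<close> whose slopes \<open>s\<close> tend to \<open>0\<close>, and the expansion makes the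
  first quotient tend to \<open>A\<close>.\<close>

lemma convex_on_difference_quotient_mono:
  fixes f :: "real \<Rightarrow> real"
  assumes f: "convex_on I f" and I: "t \<in> I" "t + h \<in> I" "t + k \<in> I"
    and hk: "h \<noteq> 0" "k \<noteq> 0" "h \<le> k"
  shows "(f (t + h) - f t) / h \<le> (f (t + k) - f t) / k"
proof -
  have swap: "(f a - f b) / (a - b) = (f b - f a) / (b - a)" for a b
    by (metis minus_diff_eq minus_divide_divide)
  consider "0 < h" "h < k" | "h < 0" "0 < k" | "h < k" "k < 0" | "h = k"
    using hk by linarith
  then show ?thesis
  proof cases
    case 1
    from convex_on_slope_le(1)[OF f I(1) I(3), of "t + h"] 1 show ?thesis
      by (simp add: swap diff_divide_distrib)
  next
    case 2
    from convex_on_slope_le[OF f I(2) I(3), of t] 2 show ?thesis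
      by (simp add: swap diff_divide_distrib)
  next
    case 3
    from convex_on_slope_le(2)[OF f I(2) I(1), of "t + k"] 3 show ?thesis
      by (simp add: swap diff_divide_distrib)
  qed simp
qed

lemma convex_on_rderiv:
  fixes f :: "real \<Rightarrow> real"
  assumes f: "convex_on I f" and "open I" "t \<in> I"
  shows "((\<lambda>h. (f (t + h) - f t) / h) \<longlongrightarrow> rderiv f t) (at_right 0)"
proof -
  let ?q = "\<lambda>h. (f (t + h) - f t) / h"
  obtain e where e: "e > 0" "ball t e \<subseteq> I"
    using \<open>open I\<close> \<open>t \<in> I\<close> by (rule openE)
  have inI: "t + h \<in> I" if "\<bar>h\<bar> < e" for h
    using e(2) that by (auto simp: dist_real_def)
  have "(?q \<longlongrightarrow> Inf (?q ` ({0<..} \<inter> {-e<..<e}))) (at 0 within {0<..} \<inter> {-e<..<e})"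
  proof (rule Lim_right_bound)
    fix a b :: real assume "a \<in> {-e<..<e}" "b \<in> {-e<..<e}" "0 < a" "a \<le> b"
    then show "?q a \<le> ?q b"
      by (intro convex_on_difference_quotient_mono[OF f \<open>t \<in> I\<close>] inI) auto
  next
    fix a :: real assume "a \<in> {-e<..<e}" "0 < a"
    then show "?q (- e / 2) \<le> ?q a"
      using e by (intro convex_on_difference_quotient_mono[OF f \<open>t \<in> I\<close>] inI) auto
  qed
  moreover have "at 0 within {0<..} \<inter> {-e<..<e} = at_right (0::real)"
    by (rule at_within_nhd[where S = "{-e<..<e}"]) (use e in auto)
  ultimately show ?thesis
    unfolding rderiv_def by (simp add: tendsto_Lim)
qed

lemma convex_on_lderiv:
  fixes f :: "real \<Rightarrow> real"
  assumes f: "convex_on I f" and "open I" "t \<in> I"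
  shows "((\<lambda>h. (f (t + h) - f t) / h) \<longlongrightarrow> lderiv f t) (at_left 0)"
proof -
  let ?q = "\<lambda>h. (f (t + h) - f t) / h"
  obtain e where e: "e > 0" "ball t e \<subseteq> I"
    using \<open>open I\<close> \<open>t \<in> I\<close> by (rule openE)
  have inI: "t + h \<in> I" if "\<bar>h\<bar> < e" for h
    using e(2) that by (auto simp: dist_real_def)
  have "(?q \<longlongrightarrow> Sup (?q ` ({..<0} \<inter> {-e<..<e}))) (at 0 within {..<0} \<inter> {-e<..<e})"
  proof (rule Lim_left_bound)
    fix a b :: real assume "a \<in> {-e<..<e}" "b \<in> {-e<..<e}" "b < 0" "a \<le> b"
    then show "?q a \<le> ?q b"
      by (intro convex_on_difference_quotient_mono[OF f \<open>t \<in> I\<close>] inI) auto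
  next
    fix b :: real assume "b \<in> {-e<..<e}" "b < 0"
    then show "?q b \<le> ?q (e / 2)"
      using e by (intro convex_on_difference_quotient_mono[OF f \<open>t \<in> I\<close>] inI) auto
  qed
  moreover have "at 0 within {..<0} \<inter> {-e<..<e} = at_left (0::real)"
    by (rule at_within_nhd[where S = "{-e<..<e}"]) (use e in auto)
  ultimately show ?thesis
    unfolding lderiv_def by (simp add: tendsto_Lim)
qed

lemma convex_on_rderiv_le_slope:
  fixes f :: "real \<Rightarrow> real"
  assumes f: "convex_on I f" and I: "open I" "t \<in> I" "u \<in> I" and "t < u"
  shows "rderiv f t \<le> (f u - f t) / (u - t)"
proof (rule tendsto_upperbound[OF convex_on_rderiv[OF f I(1,2)]])
  have Icc: "{t..u} \<subseteq> I"
    using I by (intro connected_contains_Icc convex_connected convex_on_imp_convex[OF f])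
  have "h \<in> {0<..<u - t} \<Longrightarrow> (f (t + h) - f t) / h \<le> (f (t + (u - t)) - f t) / (u - t)" for h
    by (rule convex_on_difference_quotient_mono[OF f I(2)]) (use \<open>t < u\<close> I Icc in \<open>auto simp: subset_eq\<close>)
  then show "\<forall>\<^sub>F h in at_right 0. (f (t + h) - f t) / h \<le> (f u - f t) / (u - t)"
    using eventually_at_right_real[of 0 "u - t"] \<open>t < u\<close> by (auto elim: eventually_mono)
qed simp

lemma convex_on_slope_le_lderiv:
  fixes f :: "real \<Rightarrow> real"
  assumes f: "convex_on I f" and I: "open I" "t \<in> I" "u \<in> I" and "t < u"
  shows "(f u - f t) / (u - t) \<le> lderiv f u"
proof (rule tendsto_lowerbound[OF convex_on_lderiv[OF f I(1,3)]])
  have Icc: "{t..u} \<subseteq> I"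
    using I by (intro connected_contains_Icc convex_connected convex_on_imp_convex[OF f])
  have "h \<in> {t - u<..<0} \<Longrightarrow> (f (u + (t - u)) - f u) / (t - u) \<le> (f (u + h) - f u) / h" for h
    by (rule convex_on_difference_quotient_mono[OF f I(3)]) (use \<open>t < u\<close> I Icc in \<open>auto simp: subset_eq\<close>)
  moreover have "(f (u + (t - u)) - f u) / (t - u) = (f u - f t) / (u - t)"
    by (simp add: divide_simps) argo
  ultimately show "\<forall>\<^sub>F h in at_left 0. (f u - f t) / (u - t) \<le> (f (u + h) - f u) / h"
    using eventually_at_left_real[of "t - u" 0] \<open>t < u\<close> by (auto elim: eventually_mono)
qed simp

lemma DERIV_imp_rderiv:
  assumes "(f has_real_derivative D) (at x)"
  shows "rderiv f x = D"
proof -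
  have "((\<lambda>h. (f (x + h) - f x) / h) \<longlongrightarrow> D) (at_right 0)"
    using assms unfolding DERIV_def by (rule tendsto_within_subset) simp
  then show ?thesis
    unfolding rderiv_def by (simp add: tendsto_Lim)
qed

lemma DERIV_imp_lderiv:
  assumes "(f has_real_derivative D) (at x)"
  shows "lderiv f x = D"
proof -
  have "((\<lambda>h. (f (x + h) - f x) / h) \<longlongrightarrow> D) (at_left 0)"
    using assms unfolding DERIV_def by (rule tendsto_within_subset) simp
  then show ?thesis
    unfolding lderiv_def by (simp add: tendsto_Lim)
qed

lemma DERIV_eventually_linear_bound:
  assumes "(f has_real_derivative D) (at x)" and "\<epsilon> > 0"
  shows "\<forall>\<^sub>F h in at 0. \<bar>f (x + h) - f x - D * h\<bar> \<le> \<epsilon> * \<bar>h\<bar>"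
proof -
  have "\<forall>\<^sub>F h in at 0. \<bar>(f (x + h) - f x) / h - D\<bar> < \<epsilon>"
    using assms unfolding DERIV_def tendsto_iff by (simp add: dist_real_def)
  moreover have "\<forall>\<^sub>F h in at (0::real). h \<noteq> 0"
    by (rule eventually_neq_at_within)
  ultimately show ?thesis
  proof eventually_elim
    case (elim h)
    have "\<bar>f (x + h) - f x - D * h\<bar> = \<bar>h\<bar> * \<bar>(f (x + h) - f x) / h - D\<bar>"
      using elim(2) by (simp add: abs_mult[symmetric] field_simps)
    also have "\<dots> \<le> \<epsilon> * \<bar>h\<bar>"
      using elim(1) by (metis abs_ge_zero less_imp_le mult.commute mult_right_mono)
    finally show ?case .
  qed
qed

lemma slope_bounds_imp_quadratic_bounds_partition:
  fixes \<phi> :: "real \<Rightarrow> real"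
  assumes "0 \<le> x" "n > 0"
    and lower: "\<And>t u. 0 \<le> t \<Longrightarrow> t < u \<Longrightarrow> u \<le> x \<Longrightarrow> a * t \<le> (\<phi> u - \<phi> t) / (u - t)"
    and upper: "\<And>t u. 0 \<le> t \<Longrightarrow> t < u \<Longrightarrow> u \<le> x \<Longrightarrow> (\<phi> u - \<phi> t) / (u - t) \<le> b * u"
  shows "a / 2 * x\<^sup>2 * (1 - inverse (real n)) \<le> \<phi> x - \<phi> 0"
    and "\<phi> x - \<phi> 0 \<le> b / 2 * x\<^sup>2 * (1 + inverse (real n))"
proof -
  define p where "p i = x * real i / real n" for i :: nat
  have gauss: "(\<Sum>i<m. real i) = real m * (real m - 1) / 2" for m
    by (induction m) (simp_all add: field_simps)
  have "(\<Sum>i<n. a * p i * (x / n)) \<le> \<phi> x - \<phi> 0 \<and> \<phi> x - \<phi> 0 \<le> (\<Sum>i<n. b * p (Suc i) * (x / n))"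
  proof (cases "x = 0")
    case False
    with \<open>0 \<le> x\<close> have "x > 0" by simp
    have step: "p i \<ge> 0" "p i < p (Suc i)" "p (Suc i) - p i = x / n" for i
      using \<open>x > 0\<close> \<open>n > 0\<close> by (auto simp: p_def field_simps)
    have last: "i < n \<Longrightarrow> p (Suc i) \<le> x" for i
      using \<open>x > 0\<close> \<open>n > 0\<close> mult_left_mono[of "real (Suc i)" "real n" x]
      by (simp add: p_def pos_divide_le_eq del: of_nat_Suc)
    have telescope: "\<phi> x - \<phi> 0 = (\<Sum>i<n. \<phi> (p (Suc i)) - \<phi> (p i))"
      using sum_lessThan_telescope[of "\<lambda>i. \<phi> (p i)" n] \<open>n > 0\<close> by (simp add: p_def)
    have "a * p i * (x / n) \<le> \<phi> (p (Suc i)) - \<phi> (p i)"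
      and "\<phi> (p (Suc i)) - \<phi> (p i) \<le> b * p (Suc i) * (x / n)" if "i < n" for i
      using lower[OF step(1,2) last[OF that]] upper[OF step(1,2) last[OF that]] \<open>x > 0\<close> \<open>n > 0\<close>
      unfolding step(3) by (simp_all add: pos_le_divide_eq pos_divide_le_eq)
    then show ?thesis
      unfolding telescope by (auto intro!: sum_mono)
  qed (simp add: p_def)
  moreover have "(\<Sum>i<n. a * p i * (x / n)) = a / 2 * x\<^sup>2 * (1 - inverse (real n))"
    using \<open>n > 0\<close> by (simp add: p_def sum_distrib_left[symmetric] sum_divide_distrib[symmetric]
      gauss power2_eq_square field_simps)
  moreover have "(\<Sum>i<n. b * p (Suc i) * (x / n)) = b / 2 * x\<^sup>2 * (1 + inverse (real n))"
    using \<open>n > 0\<close> by (simp add: p_def sum_distrib_left[symmetric] sum_divide_distrib[symmetric]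
      sum.distrib gauss power2_eq_square field_simps)
  ultimately show "a / 2 * x\<^sup>2 * (1 - inverse (real n)) \<le> \<phi> x - \<phi> 0"
    and "\<phi> x - \<phi> 0 \<le> b / 2 * x\<^sup>2 * (1 + inverse (real n))"
    by linarith+
qed

lemma slope_bounds_imp_quadratic_bounds:
  fixes \<phi> :: "real \<Rightarrow> real"
  assumes "0 \<le> x"
    and lower: "\<And>t u. 0 \<le> t \<Longrightarrow> t < u \<Longrightarrow> u \<le> x \<Longrightarrow> a * t \<le> (\<phi> u - \<phi> t) / (u - t)"
    and upper: "\<And>t u. 0 \<le> t \<Longrightarrow> t < u \<Longrightarrow> u \<le> x \<Longrightarrow> (\<phi> u - \<phi> t) / (u - t) \<le> b * u"
  shows "a / 2 * x\<^sup>2 \<le> \<phi> x - \<phi> 0" and "\<phi> x - \<phi> 0 \<le> b / 2 * x\<^sup>2"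
proof -
  note partition = slope_bounds_imp_quadratic_bounds_partition[OF \<open>0 \<le> x\<close> _ lower upper]
  have lim_a: "(\<lambda>n. a / 2 * x\<^sup>2 * (1 - inverse (real n))) \<longlonglongrightarrow> a / 2 * x\<^sup>2 * (1 - 0)"
    and lim_b: "(\<lambda>n. b / 2 * x\<^sup>2 * (1 + inverse (real n))) \<longlonglongrightarrow> b / 2 * x\<^sup>2 * (1 + 0)"
    by (intro tendsto_mult_left tendsto_diff tendsto_add tendsto_const lim_inverse_n)+
  have ev_a: "\<exists>N. \<forall>n\<ge>N. a / 2 * x\<^sup>2 * (1 - inverse (real n)) \<le> \<phi> x - \<phi> 0"
    and ev_b: "\<exists>N. \<forall>n\<ge>N. \<phi> x - \<phi> 0 \<le> b / 2 * x\<^sup>2 * (1 + inverse (real n))"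
    by (intro exI[of _ 1] allI impI partition; simp)+
  show "a / 2 * x\<^sup>2 \<le> \<phi> x - \<phi> 0"
    using LIMSEQ_le_const2[OF lim_a ev_a] by simp
  show "\<phi> x - \<phi> 0 \<le> b / 2 * x\<^sup>2"
    using LIMSEQ_le_const[OF lim_b ev_b] by simp
qed

lemma convex_on_slope_bounds_near_0:
  fixes f :: "real \<Rightarrow> real"
  assumes f: "convex_on I f" and I: "open I" "0 \<in> I"
    and r': "(rderiv f has_real_derivative A) (at 0)" and "rderiv f 0 = 0"
    and l': "(lderiv f has_real_derivative A) (at 0)" and "lderiv f 0 = 0"
    and "\<epsilon> > 0"
  obtains \<eta> where "\<eta> > 0"
    and "\<And>t u. - \<eta> < t \<Longrightarrow> t < u \<Longrightarrow> u < \<eta> \<Longrightarrow> A * t - \<epsilon> * \<bar>t\<bar> \<le> (f u - f t) / (u - t)"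
    and "\<And>t u. - \<eta> < t \<Longrightarrow> t < u \<Longrightarrow> u < \<eta> \<Longrightarrow> (f u - f t) / (u - t) \<le> A * u + \<epsilon> * \<bar>u\<bar>"
proof -
  define near where "near t \<longleftrightarrow> t \<in> I \<and> \<bar>rderiv f t - A * t\<bar> \<le> \<epsilon> * \<bar>t\<bar> \<and>
    \<bar>lderiv f t - A * t\<bar> \<le> \<epsilon> * \<bar>t\<bar>" for t
  have "\<forall>\<^sub>F t in at 0. near t"
    using eventually_at_in_open[OF I] DERIV_eventually_linear_bound[OF r' \<open>\<epsilon> > 0\<close>]
      DERIV_eventually_linear_bound[OF l' \<open>\<epsilon> > 0\<close>]
    by eventually_elim (simp add: near_def \<open>rderiv f 0 = 0\<close> \<open>lderiv f 0 = 0\<close>)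
  then obtain \<eta> where "\<eta> > 0" and "\<And>t. t \<noteq> 0 \<Longrightarrow> \<bar>t\<bar> < \<eta> \<Longrightarrow> near t"
    unfolding eventually_at by (auto simp: dist_real_def)
  then have near: "near t" if "\<bar>t\<bar> < \<eta>" for t
    using that I(2) \<open>rderiv f 0 = 0\<close> \<open>lderiv f 0 = 0\<close> by (cases "t = 0") (auto simp: near_def)
  show ?thesis
  proof (rule that[OF \<open>\<eta> > 0\<close>])
    fix t u assume "- \<eta> < t" "t < u" "u < \<eta>"
    then have "near t" "near u"
      by (auto intro: near)
    then show "A * t - \<epsilon> * \<bar>t\<bar> \<le> (f u - f t) / (u - t)"
      and "(f u - f t) / (u - t) \<le> A * u + \<epsilon> * \<bar>u\<bar>"
      using convex_on_rderiv_le_slope[OF f I(1), of t u] convex_on_slope_le_lderiv[OF f I(1), of t u]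
        \<open>t < u\<close> by (auto simp: near_def abs_le_iff)
  qed
qed

lemma convex_on_second_order_expansion:
  fixes f :: "real \<Rightarrow> real"
  assumes f: "convex_on I f" and I: "open I" "0 \<in> I" and "f 0 = 0"
    and f': "(f has_real_derivative 0) (at 0)"
    and r': "(rderiv f has_real_derivative A) (at 0)"
    and l': "(lderiv f has_real_derivative A) (at 0)"
    and "\<epsilon> > 0"
  shows "\<forall>\<^sub>F x in at 0. \<bar>f x - A / 2 * x\<^sup>2\<bar> \<le> \<epsilon> * x\<^sup>2"
proof -
  obtain \<eta> where "\<eta> > 0"
    and lower: "\<And>t u. - \<eta> < t \<Longrightarrow> t < u \<Longrightarrow> u < \<eta> \<Longrightarrow> A * t - \<epsilon> * \<bar>t\<bar> \<le> (f u - f t) / (u - t)"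
    and upper: "\<And>t u. - \<eta> < t \<Longrightarrow> t < u \<Longrightarrow> u < \<eta> \<Longrightarrow> (f u - f t) / (u - t) \<le> A * u + \<epsilon> * \<bar>u\<bar>"
    using convex_on_slope_bounds_near_0[OF f I r' DERIV_imp_rderiv[OF f'] l' DERIV_imp_lderiv[OF f']
        \<open>\<epsilon> > 0\<close>] by blast
  have right: "\<bar>f x - A / 2 * x\<^sup>2\<bar> \<le> \<epsilon> * x\<^sup>2" if "0 \<le> x" "x < \<eta>" for x
  proof -
    have "(A - \<epsilon>) * t \<le> (f u - f t) / (u - t)" "(f u - f t) / (u - t) \<le> (A + \<epsilon>) * u"
      if "0 \<le> t" "t < u" "u \<le> x" for t u
      using lower[of t u] upper[of t u] that \<open>x < \<eta>\<close> by (simp_all add: algebra_simps)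
    from slope_bounds_imp_quadratic_bounds[OF \<open>0 \<le> x\<close> this] show ?thesis
      using \<open>f 0 = 0\<close> \<open>\<epsilon> > 0\<close> by (simp add: abs_le_iff algebra_simps)
  qed
  have left: "\<bar>f (- x) - A / 2 * x\<^sup>2\<bar> \<le> \<epsilon> * x\<^sup>2" if "0 \<le> x" "x < \<eta>" for x
  proof -
    have reflect: "(f (- u) - f (- t)) / (u - t) = - ((f (- t) - f (- u)) / (- t - - u))" for t u
      by (simp add: minus_divide_left)
    have "(A - \<epsilon>) * t \<le> (f (- u) - f (- t)) / (u - t)" "(f (- u) - f (- t)) / (u - t) \<le> (A + \<epsilon>) * u"
      if "0 \<le> t" "t < u" "u \<le> x" for t u
      unfolding reflect using lower[of "- u" "- t"] upper[of "- u" "- t"] that \<open>x < \<eta>\<close>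
      by (simp_all add: algebra_simps)
    from slope_bounds_imp_quadratic_bounds[OF \<open>0 \<le> x\<close>, of _ "\<lambda>y. f (- y)", OF this] show ?thesis
      using \<open>f 0 = 0\<close> \<open>\<epsilon> > 0\<close> by (simp add: abs_le_iff algebra_simps)
  qed
  show ?thesis
    unfolding eventually_at
  proof (intro exI[of _ \<eta>] conjI ballI impI \<open>\<eta> > 0\<close>)
    fix x :: real assume "x \<noteq> 0 \<and> dist x 0 < \<eta>"
    then show "\<bar>f x - A / 2 * x\<^sup>2\<bar> \<le> \<epsilon> * x\<^sup>2"
      using right[of x] left[of "- x"] by (cases "x \<ge> 0") (auto simp: dist_real_def)
  qed
qed

lemma chi0_through_origin:
  assumes "a < 0" "0 < b"
  shows "chi0 (a, y) (0, 0) (b, z) = 2 * \<bar>(z / b - y / a) / (b - a)\<bar> /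
    (sqrt (1 + (y / a)\<^sup>2) * sqrt (1 + (z / b)\<^sup>2) * sqrt (1 + ((z - y) / (b - a))\<^sup>2))"
proof -
  have norm_factor: "sqrt (u\<^sup>2 + v\<^sup>2) = \<bar>u\<bar> * sqrt (1 + (v / u)\<^sup>2)" if "u \<noteq> 0" for u v :: real
  proof -
    have "u\<^sup>2 + v\<^sup>2 = u\<^sup>2 * (1 + (v / u)\<^sup>2)"
      using that by (simp add: field_simps)
    then show ?thesis
      by (simp add: real_sqrt_mult)
  qed
  have d1: "dist (a, y) (0, 0) = - a * sqrt (1 + (y / a)\<^sup>2)"
    using norm_factor[of a y] assms by (simp add: dist_Pair_Pair dist_real_def)
  have d2: "dist (0, 0) (b, z) = b * sqrt (1 + (z / b)\<^sup>2)"
    using norm_factor[of b z] assms by (simp add: dist_Pair_Pair dist_real_def power2_commute)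
  have d3: "dist (b, z) (a, y) = (b - a) * sqrt (1 + ((z - y) / (b - a))\<^sup>2)"
    using norm_factor[of "b - a" "z - y"] assms by (simp add: dist_Pair_Pair dist_real_def)
  have area: "tri_area (a, y) (0, 0) (b, z) = - a * b * \<bar>z / b - y / a\<bar> / 2"
  proof -
    have "(0 - a) * (z - y) - (b - a) * (0 - y) = - a * b * (z / b - y / a)"
      using assms by (simp add: field_simps)
    then show ?thesis
      unfolding tri_area_def using assms by (simp add: abs_mult)
  qed
  \<comment> \<open>Naming the square roots and the absolute value keeps \<open>field_simps\<close> from expanding them.\<close>
  define s1 s2 s3 where "s1 = sqrt (1 + (y / a)\<^sup>2)" and "s2 = sqrt (1 + (z / b)\<^sup>2)"
    and "s3 = sqrt (1 + ((z - y) / (b - a))\<^sup>2)"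
  define w where "w = \<bar>z / b - y / a\<bar>"
  have "s1 > 0" "s2 > 0" "s3 > 0"
    unfolding s1_def s2_def s3_def by (simp_all add: add_pos_nonneg)
  then have "chi0 (a, y) (0, 0) (b, z) = 2 * w / (b - a) / (s1 * s2 * s3)"
    unfolding chi0_def d1 d2 d3 area s1_def[symmetric] s2_def[symmetric] s3_def[symmetric]
      w_def[symmetric] using assms by (simp add: field_simps)
  moreover have "\<bar>(z / b - y / a) / (b - a)\<bar> = w / (b - a)"
    unfolding w_def using assms by (simp add: abs_divide)
  ultimately show ?thesis
    unfolding s1_def s2_def s3_def by simp
qed

lemma quadratic_bound_imp_slope_bound:
  fixes x y :: real
  assumes "\<bar>y - c * x\<^sup>2\<bar> \<le> \<epsilon> * x\<^sup>2" and "x \<noteq> 0"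
  shows "\<bar>y / x - c * x\<bar> \<le> \<epsilon> * \<bar>x\<bar>"
proof -
  have "\<bar>y / x - c * x\<bar> = \<bar>y - c * x\<^sup>2\<bar> / \<bar>x\<bar>"
    using \<open>x \<noteq> 0\<close> by (simp add: abs_divide[symmetric] power2_eq_square diff_divide_distrib)
  also have "\<dots> \<le> \<epsilon> * \<bar>x\<bar>"
    using assms by (simp add: divide_le_eq power2_eq_square abs_mult_self_eq mult.assoc)
  finally show ?thesis .
qed

lemma quadratic_expansion_imp_slope_tendsto_0:
  fixes f :: "real \<Rightarrow> real"
  assumes "\<forall>\<^sub>F x in at 0. \<bar>f x - c * x\<^sup>2\<bar> \<le> x\<^sup>2"
  shows "((\<lambda>x. f x / x) \<longlongrightarrow> 0) (at 0)"
proof (rule Lim_null_comparison)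
  show "\<forall>\<^sub>F x in at 0. norm (f x / x) \<le> (\<bar>c\<bar> + 1) * \<bar>x\<bar>"
    using assms eventually_neq_at_within[of 0 0 UNIV]
  proof eventually_elim
    case (elim x)
    then have "\<bar>f x / x - c * x\<bar> \<le> \<bar>x\<bar>"
      using quadratic_bound_imp_slope_bound[of "f x" c x 1] by simp
    moreover have "norm (f x / x) \<le> \<bar>f x / x - c * x\<bar> + \<bar>c\<bar> * \<bar>x\<bar>"
      unfolding real_norm_def abs_mult[symmetric] by arith
    ultimately show ?case
      by (simp add: algebra_simps)
  qed
  show "((\<lambda>x. (\<bar>c\<bar> + 1) * \<bar>x\<bar>) \<longlongrightarrow> 0) (at 0)"
    by (rule tendsto_eq_intros refl | simp)+
qed

lemma chord_slope_le:
  fixes a b y z :: real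
  assumes "a < 0" "0 < b"
  shows "\<bar>(z - y) / (b - a)\<bar> \<le> \<bar>y / a\<bar> + \<bar>z / b\<bar>"
proof -
  have convex_combination: "(z - y) / (b - a) = b / (b - a) * (z / b) + - a / (b - a) * (y / a)"
    using assms by (simp add: divide_simps)
  have weight: "\<bar>w * u\<bar> \<le> \<bar>u\<bar>" if "0 \<le> w" "w \<le> 1" for w u :: real
    using that by (simp add: abs_mult mult_left_le_one_le)
  have "\<bar>(z - y) / (b - a)\<bar> \<le> \<bar>b / (b - a) * (z / b)\<bar> + \<bar>- a / (b - a) * (y / a)\<bar>"
    unfolding convex_combination by (rule abs_triangle_ineq)
  also have "\<dots> \<le> \<bar>z / b\<bar> + \<bar>y / a\<bar>"
    using assms by (intro add_mono weight) (simp_all add: field_simps)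
  finally show ?thesis
    by simp
qed

lemma filterlim_at_opposite_sides:
  shows "filterlim fst (at 0) (at (0::real, 0::real) within {(a, b). a < 0 \<and> 0 < b})"
    and "filterlim snd (at 0) (at (0::real, 0::real) within {(a, b). a < 0 \<and> 0 < b})"
  by (auto simp: filterlim_at eventually_at_filter intro!: always_eventually tendsto_eq_intros)

lemma second_divided_difference_tendsto:
  fixes f :: "real \<Rightarrow> real"
  assumes expansion: "\<And>\<epsilon>. \<epsilon> > 0 \<Longrightarrow> \<forall>\<^sub>F x in at 0. \<bar>f x - c * x\<^sup>2\<bar> \<le> \<epsilon> * x\<^sup>2"
  shows "((\<lambda>(a, b). (f b / b - f a / a) / (b - a)) \<longlongrightarrow> c)
    (at (0, 0) within {(a, b). a < 0 \<and> 0 < b})"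
proof (rule tendstoI)
  fix e :: real assume "e > 0"
  let ?F = "at (0::real, 0::real) within {(a, b). a < 0 \<and> 0 < b}"
  have "\<forall>\<^sub>F z in ?F. fst z < 0 \<and> 0 < snd z"
    unfolding eventually_at_filter by (rule always_eventually) auto
  moreover have "\<forall>\<^sub>F x in at 0. \<bar>f x - c * x\<^sup>2\<bar> \<le> e / 2 * x\<^sup>2"
    using \<open>e > 0\<close> by (intro expansion) simp
  then have "\<forall>\<^sub>F z in ?F. \<bar>f (fst z) - c * (fst z)\<^sup>2\<bar> \<le> e / 2 * (fst z)\<^sup>2"
    and "\<forall>\<^sub>F z in ?F. \<bar>f (snd z) - c * (snd z)\<^sup>2\<bar> \<le> e / 2 * (snd z)\<^sup>2"
    using filterlim_at_opposite_sides by (auto simp: filterlim_iff)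
  ultimately show "\<forall>\<^sub>F z in ?F. dist ((\<lambda>(a, b). (f b / b - f a / a) / (b - a)) z) c < e"
  proof eventually_elim
    case (elim z)
    then obtain a b where z: "z = (a, b)" "a < 0" "0 < b"
      by (cases z) auto
    have "\<bar>f a / a - c * a\<bar> \<le> e / 2 * \<bar>a\<bar>" "\<bar>f b / b - c * b\<bar> \<le> e / 2 * \<bar>b\<bar>"
      using quadratic_bound_imp_slope_bound[OF elim(2)[unfolded z fst_conv]]
        quadratic_bound_imp_slope_bound[OF elim(3)[unfolded z snd_conv]] z
      by simp_all
    moreover have "(f b / b - f a / a) - c * (b - a) = (f b / b - c * b) - (f a / a - c * a)"
      by (simp add: algebra_simps)
    ultimately have "\<bar>(f b / b - f a / a) - c * (b - a)\<bar> \<le> e / 2 * \<bar>b\<bar> + e / 2 * \<bar>a\<bar>"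
      using abs_triangle_ineq4[of "f b / b - c * b" "f a / a - c * a"] by linarith
    also have "\<dots> = e / 2 * (b - a)"
      using z by (simp add: algebra_simps)
    finally have "\<bar>(f b / b - f a / a) - c * (b - a)\<bar> / (b - a) \<le> e / 2"
      using z by (simp add: divide_le_eq)
    moreover have "(f b / b - f a / a) / (b - a) - c = ((f b / b - f a / a) - c * (b - a)) / (b - a)"
      using z by (simp add: field_simps)
    then have "dist ((\<lambda>(a, b). (f b / b - f a / a) / (b - a)) z) c =
        \<bar>(f b / b - f a / a) - c * (b - a)\<bar> / (b - a)"
      using z by (simp add: dist_real_def abs_divide)
    ultimately show ?case
      using \<open>e > 0\<close> by linarith
  qed
qed

lemma chi0_graph_tendsto:
  fixes f :: "real \<Rightarrow> real"
  assumes expansion: "\<And>\<epsilon>. \<epsilon> > 0 \<Longrightarrow> \<forall>\<^sub>F x in at 0. \<bar>f x - c * x\<^sup>2\<bar> \<le> \<epsilon> * x\<^sup>2"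
  shows "((\<lambda>(a, b). chi0 (a, f a) (0, 0) (b, f b)) \<longlongrightarrow> 2 * \<bar>c\<bar>)
    (at (0, 0) within {(a, b). a < 0 \<and> 0 < b})"
proof -
  define F where "F = at (0::real, 0::real) within {(a, b). a < 0 \<and> 0 < b}"
  have in_F: "\<forall>\<^sub>F z in F. fst z < 0 \<and> 0 < snd z"
    unfolding F_def eventually_at_filter by (rule always_eventually) auto
  have "((\<lambda>x. f x / x) \<longlongrightarrow> 0) (at 0)"
    using expansion[of 1] by (intro quadratic_expansion_imp_slope_tendsto_0) simp
  then have s1: "((\<lambda>z. f (fst z) / fst z) \<longlongrightarrow> 0) F" and s2: "((\<lambda>z. f (snd z) / snd z) \<longlongrightarrow> 0) F"
    unfolding F_def using filterlim_compose filterlim_at_opposite_sides by blast+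
  have s3: "((\<lambda>z. (f (snd z) - f (fst z)) / (snd z - fst z)) \<longlongrightarrow> 0) F"
  proof (rule Lim_null_comparison)
    show "((\<lambda>z. \<bar>f (fst z) / fst z\<bar> + \<bar>f (snd z) / snd z\<bar>) \<longlongrightarrow> 0) F"
      using tendsto_add[OF tendsto_rabs_zero[OF s1] tendsto_rabs_zero[OF s2]] by simp
    show "\<forall>\<^sub>F z in F. norm ((f (snd z) - f (fst z)) / (snd z - fst z)) \<le>
        \<bar>f (fst z) / fst z\<bar> + \<bar>f (snd z) / snd z\<bar>"
      using in_F by (elim eventually_mono) (use chord_slope_le in \<open>simp only: real_norm_def\<close>)
  qed
  have key: "((\<lambda>z. (f (snd z) / snd z - f (fst z) / fst z) / (snd z - fst z)) \<longlongrightarrow> c) F"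
    using second_divided_difference_tendsto[OF expansion] unfolding F_def case_prod_beta .
  have sqrt_tendsto: "((\<lambda>z. sqrt (1 + (g z)\<^sup>2)) \<longlongrightarrow> 1) F" if "(g \<longlongrightarrow> 0) F" for g
    using that by (auto intro!: tendsto_eq_intros)
  have "((\<lambda>z. 2 * \<bar>(f (snd z) / snd z - f (fst z) / fst z) / (snd z - fst z)\<bar> /
      (sqrt (1 + (f (fst z) / fst z)\<^sup>2) * sqrt (1 + (f (snd z) / snd z)\<^sup>2) *
       sqrt (1 + ((f (snd z) - f (fst z)) / (snd z - fst z))\<^sup>2))) \<longlongrightarrow> 2 * \<bar>c\<bar> / (1 * 1 * 1)) F"
    by (intro tendsto_divide tendsto_mult tendsto_const tendsto_rabs key sqrt_tendsto s1 s2 s3) simp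
  moreover have "\<forall>\<^sub>F z in F. (\<lambda>(a, b). chi0 (a, f a) (0, 0) (b, f b)) z =
      2 * \<bar>(f (snd z) / snd z - f (fst z) / fst z) / (snd z - fst z)\<bar> /
      (sqrt (1 + (f (fst z) / fst z)\<^sup>2) * sqrt (1 + (f (snd z) / snd z)\<^sup>2) *
       sqrt (1 + ((f (snd z) - f (fst z)) / (snd z - fst z))\<^sup>2))"
    using in_F by (elim eventually_mono) (auto simp: chi0_through_origin)
  ultimately show ?thesis
    unfolding F_def by (simp add: tendsto_cong)
qed

lemma osc_curvature_graph_if_local_graph:
  fixes \<sigma> U :: "(real \<times> real) set" and f :: "real \<Rightarrow> real"
  assumes U: "open U" "(0, 0) \<in> U" and graph: "\<sigma> \<inter> U = {(x, f x) | x. x \<in> J} \<inter> U"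
    and lim: "((\<lambda>(a, b). chi0 (a, f a) (0, 0) (b, f b)) \<longlongrightarrow> k)
      (at (0, 0) within {(a, b). a < 0 \<and> 0 < b})"
  shows "osc_curvature_graph \<sigma> (0, 0) k"
proof -
  define W where "W = {(p, m). p \<in> \<sigma> \<and> m \<in> \<sigma> \<and> fst p < 0 \<and> 0 < (fst m :: real)}"
  define G where "G = at ((0, 0), (0::real, 0::real)) within W"
  define abscissae :: "(real \<times> real) \<times> (real \<times> real) \<Rightarrow> real \<times> real"
    where "abscissae z = (fst (fst z), fst (snd z))" for z
  have on_graph: "p = (fst p, f (fst p))" if "p \<in> \<sigma>" "p \<in> U" for p
  proof -
    have "p \<in> {(x, f x) | x. x \<in> J}"
      using that graph by blast
    then show ?thesis
      by auto
  qed
  have in_W: "\<forall>\<^sub>F z in G. z \<in> W"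
    unfolding G_def eventually_at_filter by simp
  have "filterlim abscissae (at (0, 0) within {(a, b). a < 0 \<and> 0 < b}) G"
    unfolding filterlim_at
  proof
    show "\<forall>\<^sub>F z in G. abscissae z \<in> {(a, b). a < 0 \<and> 0 < b} \<and> abscissae z \<noteq> (0, 0)"
      using in_W by (elim eventually_mono) (auto simp: W_def abscissae_def)
    show "(abscissae \<longlongrightarrow> (0, 0)) G"
      unfolding G_def abscissae_def by (auto intro!: tendsto_eq_intros)
  qed
  with lim have "((\<lambda>z. (\<lambda>(a, b). chi0 (a, f a) (0, 0) (b, f b)) (abscissae z)) \<longlongrightarrow> k) G"
    by (rule filterlim_compose)
  moreover have "\<forall>\<^sub>F z in G. z \<in> U \<times> U"
    unfolding G_def eventually_at_topological using U by (intro exI[of _ "U \<times> U"]) (auto intro: open_Times)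
  then have "\<forall>\<^sub>F z in G. (\<lambda>(a, b). chi0 (a, f a) (0, 0) (b, f b)) (abscissae z) =
      (\<lambda>(p, m). chi0 p (0, 0) m) z"
    using in_W
  proof eventually_elim
    case (elim z)
    then show ?case
      using on_graph[of "fst z"] on_graph[of "snd z"] unfolding W_def abscissae_def
      by (auto simp: case_prod_beta)
  qed
  ultimately show ?thesis
    unfolding osc_curvature_graph_def G_def W_def by (simp add: tendsto_cong)
qed

theorem proposition7p1:
  fixes \<sigma> :: "(real \<times> real) set" and f :: "real \<Rightarrow> real"
    and U :: "(real \<times> real) set" and \<delta> A :: real
  assumes "closed_convex_curve \<sigma>"
    and "(0, 0) \<in> \<sigma>"
    and "open U" and "(0, 0) \<in> U" and "\<delta> > 0"
    and "\<sigma> \<inter> U = {(x, f x) | x. x \<in> {-\<delta><..<\<delta>}} \<inter> U"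
    and "convex_on {-\<delta><..<\<delta>} f"
    and "f 0 = 0"
    and "(f has_real_derivative 0) (at 0)"
    and "(rderiv f has_real_derivative A) (at 0)"
    and "(lderiv f has_real_derivative A) (at 0)"
    and "A \<ge> 0"
  shows "osc_curvature_graph \<sigma> (0, 0) A"
proof -
  have "\<forall>\<^sub>F x in at 0. \<bar>f x - A / 2 * x\<^sup>2\<bar> \<le> \<epsilon> * x\<^sup>2" if "\<epsilon> > 0" for \<epsilon>
    using assms(5) by (intro convex_on_second_order_expansion[OF assms(7) _ _ assms(8-11) that]) auto
  then have "((\<lambda>(a, b). chi0 (a, f a) (0, 0) (b, f b)) \<longlongrightarrow> 2 * \<bar>A / 2\<bar>)
      (at (0, 0) within {(a, b). a < 0 \<and> 0 < b})"
    by (rule chi0_graph_tendsto)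
  then show ?thesis
    using assms(12) by (intro osc_curvature_graph_if_local_graph[OF assms(3,4,6)]) simp
qed

end
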